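(* The reduction relation $\to_{\tt j}$ on $\lambda j$-terms is confluent and terminating. Consequently every term $t$ has a unique ${\tt j}$-normal form ${\tt j}(t)$, and: ${\tt j}(x)=x$, ${\tt j}(\lambda x.u)=\lambda x.{\tt j}(u)$, ${\tt j}(u\,v)={\tt j}(u)\,{\tt j}(v)$, and ${\tt j}(u[x/v])={\tt j}(u)\{x/{\tt j}(v)\}$.
   Context: $\lambda j$-terms are generated by $t,u::= x\mid \lambda x.t\mid t\,u\mid t[x/u]$ ($x$ ranging over variables); $\lambda x.t$ and $t[x/u]$ bind $x$ in $t$ (not in $u$), and terms are considered modulo $\alpha$-conversion. $\mathrm{fv}(t)$ is the set of free variables, $t\{x/u\}$ is capture-avoiding meta-level substitution, and $|t|_x$ is the number of free occurrences of $x$ in $t$. If $|t|_x=n\ge2$, $t_{[y]_x}$ denotes any term obtained from $t$ by replacing $k$ of the free occurrences of $x$ by a fresh variable $y$, for some $1\le k\le n-1$. The relation $\to_{\tt j}$ is the closure under all contexts of the rules: $({\tt w})$ $t[x/u]\to t$ if $|t|_x=0$; $({\tt d})$ $t[x/u]\to t\{x/u\}$ if $|t|_x=1$; $({\tt c})$ $t[x/u]\to t_{[y]_x}[x/u][y/u]$ if $|t|_x\ge2$, $y$ fresh. *)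

theory Defs
  imports Main
begin

text \<open>lambda-j terms in de Bruijn notation (terms modulo alpha-conversion).
  Var i is a variable, Lam t binds index 0 in t, App t u is application and
  ESub t u is the explicit substitution t[x/u], which binds index 0 (= x) in t
  but not in u.\<close>

datatype trm = Var nat | Lam trm | App trm trm | ESub trm trm

fun lift :: "trm \<Rightarrow> nat \<Rightarrow> trm" where
  "lift (Var i) k = (if i < k then Var i else Var (Suc i))"
| "lift (Lam t) k = Lam (lift t (Suc k))"
| "lift (App t u) k = App (lift t k) (lift u k)"
| "lift (ESub t u) k = ESub (lift t (Suc k)) (lift u k)"

text \<open>Capture-avoiding meta-level substitution: subst t k s replaces index k
  in t by s and decrements the indices above k.  t{x/u} for the binder of x
  is subst t 0 u.\<close>
fun subst :: "trm \<Rightarrow> nat \<Rightarrow> trm \<Rightarrow> trm" where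
  "subst (Var i) k s = (if i < k then Var i else if i = k then s else Var (i - 1))"
| "subst (Lam t) k s = Lam (subst t (Suc k) (lift s 0))"
| "subst (App t u) k s = App (subst t k s) (subst u k s)"
| "subst (ESub t u) k s = ESub (subst t (Suc k) (lift s 0)) (subst u k s)"

fun occ :: "trm \<Rightarrow> nat \<Rightarrow> nat" where
  "occ (Var i) k = (if i = k then 1 else 0)"
| "occ (Lam t) k = occ t (Suc k)"
| "occ (App t u) k = occ t k + occ u k"
| "occ (ESub t u) k = occ t (Suc k) + occ u k"

text \<open>split k t t': t' is obtained from t by inserting a fresh binder for y
  just outside the binder of x (index k), and renaming some (possibly none or all)
  free occurrences of x (index k) into y (index k+1); other free indices
  above k are shifted by one.\<close>
inductive split :: "nat \<Rightarrow> trm \<Rightarrow> trm \<Rightarrow> bool" where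
  split_lt: "i < k \<Longrightarrow> split k (Var i) (Var i)"
| split_gt: "i > k \<Longrightarrow> split k (Var i) (Var (Suc i))"
| split_keep: "split k (Var k) (Var k)"
| split_ren: "split k (Var k) (Var (Suc k))"
| split_lam: "split (Suc k) t t' \<Longrightarrow> split k (Lam t) (Lam t')"
| split_app: "split k t t' \<Longrightarrow> split k u u' \<Longrightarrow> split k (App t u) (App t' u')"
| split_esub: "split (Suc k) t t' \<Longrightarrow> split k u u' \<Longrightarrow> split k (ESub t u) (ESub t' u')"

text \<open>In rule c, t' = t_[y]_x with x = index 0, y = index 1, and the requirement that
  both x and y still occur means 1 <= k <= n-1 occurrences are renamed.
  The result t_[y]_x[x/u][y/u] has u lifted in the inner substitution because
  it lies under the binder of y (y fresh, so y is not free in u).\<close>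
inductive jstep :: "trm \<Rightarrow> trm \<Rightarrow> bool" where
  j_w: "occ t 0 = 0 \<Longrightarrow> jstep (ESub t u) (subst t 0 u)"
| j_d: "occ t 0 = 1 \<Longrightarrow> jstep (ESub t u) (subst t 0 u)"
| j_c: "occ t 0 \<ge> 2 \<Longrightarrow> split 0 t t' \<Longrightarrow> occ t' 0 \<ge> 1 \<Longrightarrow> occ t' 1 \<ge> 1 \<Longrightarrow>
        jstep (ESub t u) (ESub (ESub t' (lift u 0)) u)"
| j_lam: "jstep t t' \<Longrightarrow> jstep (Lam t) (Lam t')"
| j_appl: "jstep t t' \<Longrightarrow> jstep (App t u) (App t' u)"
| j_appr: "jstep u u' \<Longrightarrow> jstep (App t u) (App t u')"
| j_esubl: "jstep t t' \<Longrightarrow> jstep (ESub t u) (ESub t' u)"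
| j_esubr: "jstep u u' \<Longrightarrow> jstep (ESub t u) (ESub t u')"

definition confluent :: "('a \<Rightarrow> 'a \<Rightarrow> bool) \<Rightarrow> bool" where
  "confluent R \<longleftrightarrow> (\<forall>a b c. R\<^sup>*\<^sup>* a b \<and> R\<^sup>*\<^sup>* a c \<longrightarrow> (\<exists>d. R\<^sup>*\<^sup>* b d \<and> R\<^sup>*\<^sup>* c d))"

definition terminating :: "('a \<Rightarrow> 'a \<Rightarrow> bool) \<Rightarrow> bool" where
  "terminating R \<longleftrightarrow> wfP (\<lambda>b a. R a b)"

definition j_normal :: "trm \<Rightarrow> bool" where
  "j_normal t \<longleftrightarrow> (\<nexists>t'. jstep t t')"

definition jnf :: "trm \<Rightarrow> trm" where
  "jnf t = (THE s. jstep\<^sup>*\<^sup>* t s \<and> j_normal s)"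

end

theory Submission
  imports Defs
begin

(* The whole proof is organised around the full expansion  expand t, which executes
   every explicit substitution of t as a meta-level substitution.  We show
     (1) t reduces to expand t (an ESub node is eliminated by repeatedly splitting off
         one occurrence with rule c until rules w/d apply),
     (2) expand is invariant under j-steps (for rule c this is the fact that
         identifying the split variable y with x again undoes the split),
     (3) expand t contains no explicit substitution, hence is j-normal.
   An abstract argument then gives confluence and uniqueness of normal forms, with
   jnf = expand; the four equations for jnf are the defining equations of expand.
   Termination is proved independently with an interpretation  weight t rho  into
   the naturals, where rho weighs the free variables and an explicit substitution
   [x/u] gives x a weight proportional to the size of u times the number of
   (expanded) occurrences of x; every rule and every context strictly decreases it. *)

text \<open>Index arithmetic in the de Bruijn lemmas below needs these case splits on
  comparisons between indices.\<close>
declare if_not_P [simp] not_less_eq [simp]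


subsection \<open>Algebra of de Bruijn lifting and substitution\<close>

lemma lift_lift:
  "i < k + 1 \<Longrightarrow> lift (lift t i) (Suc k) = lift (lift t k) i"
  by (induct t arbitrary: i k) auto

lemma lift_subst [simp]:
  "j < i + 1 \<Longrightarrow> lift (subst t j s) i = subst (lift t (i + 1)) j (lift s i)"
  by (induct t arbitrary: i j s) (simp_all add: diff_Suc lift_lift split: nat.split)

lemma lift_subst_lt:
  "i < j + 1 \<Longrightarrow> lift (subst t j s) i = subst (lift t i) (j + 1) (lift s i)"
  by (induct t arbitrary: i j s) (simp_all add: lift_lift)

lemma subst_lift [simp]: "subst (lift t k) k s = t"
  by (induct t arbitrary: k s) simp_all

text \<open>The substitution lemma  t{x/u}{y/v} = t{y/v}{x/u{y/v}}  in de Bruijn form.\<close>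
lemma subst_subst:
  "i < j + 1 \<Longrightarrow> subst (subst t (Suc j) (lift v i)) i (subst u j v) = subst (subst t i u) j v"
  by (induct t arbitrary: i j u v)
    (simp_all add: diff_Suc lift_lift [symmetric] lift_subst_lt split: nat.split)

lemma occ_lift:
  "occ (lift s k) j = (if j < k then occ s j else if j = k then 0 else occ s (j - 1))"
  by (induct s arbitrary: k j) (auto split: nat.split)

lemma occ_subst:
  "occ (subst t k s) j = (if j < k then occ t j else occ t (Suc j)) + occ t k * occ s j"
  by (induct t arbitrary: k j s) (auto simp: occ_lift algebra_simps split: nat.split)


subsection \<open>Splitting a variable\<close>

lemma split_none: "split k s (lift s (Suc k))"
proof (induct s arbitrary: k)
  case (Var i)
  consider "i < k" | "i = k" | "i > k" by linarith
  then show ?case by cases (auto intro: split.intros)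
qed (auto intro: split.intros)

text \<open>Every variable with at least one occurrence can be split off exactly one of
  them; this is the step that makes rule c applicable repeatedly.\<close>
lemma split_one:
  "occ s k \<ge> 1 \<Longrightarrow> \<exists>s'. split k s s' \<and> occ s' k = occ s k - 1 \<and> occ s' (Suc k) = 1"
proof (induct s arbitrary: k)
  case (Var i)
  then show ?case by (auto intro!: exI[of _ "Var (Suc k)"] split.intros split: if_splits)
next
  case (Lam t)
  then obtain t' where "split (Suc k) t t'" "occ t' (Suc k) = occ t (Suc k) - 1"
      "occ t' (Suc (Suc k)) = 1"
    by auto
  then show ?case by (auto intro!: exI[of _ "Lam t'"] split.intros)
next
  case (App t u)
  show ?case
  proof (cases "occ t k \<ge> 1")
    case True
    with App obtain t' where "split k t t'" "occ t' k = occ t k - 1" "occ t' (Suc k) = 1"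
      by auto
    with True show ?thesis
      by (auto intro!: exI[of _ "App t' (lift u (Suc k))"] split.intros split_none
          simp: occ_lift)
  next
    case False
    with App.prems have "occ u k \<ge> 1" by simp
    with App obtain u' where "split k u u'" "occ u' k = occ u k - 1" "occ u' (Suc k) = 1"
      by blast
    with False App.prems show ?thesis
      by (auto intro!: exI[of _ "App (lift t (Suc k)) u'"] split.intros split_none
          simp: occ_lift)
  qed
next
  case (ESub t u)
  show ?case
  proof (cases "occ t (Suc k) \<ge> 1")
    case True
    with ESub obtain t' where "split (Suc k) t t'" "occ t' (Suc k) = occ t (Suc k) - 1"
        "occ t' (Suc (Suc k)) = 1"
      by auto
    with True show ?thesis
      by (auto intro!: exI[of _ "ESub t' (lift u (Suc k))"] split.intros split_none
          simp: occ_lift)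
  next
    case False
    with ESub.prems have "occ u k \<ge> 1" by simp
    with ESub obtain u' where "split k u u'" "occ u' k = occ u k - 1" "occ u' (Suc k) = 1"
      by blast
    with False ESub.prems show ?thesis
      by (auto intro!: exI[of _ "ESub (lift t (Suc (Suc k))) u'"] split.intros split_none
          simp: occ_lift)
  qed
qed

lemma split_lift: "split k u u' \<Longrightarrow> j \<le> k \<Longrightarrow> split (Suc k) (lift u j) (lift u' j)"
  by (induct arbitrary: j rule: split.induct) (auto intro: split.intros)

lemma split_subst:
  "split (Suc k) t t' \<Longrightarrow> split k u u' \<Longrightarrow> j \<le> k \<Longrightarrow>
     split k (subst t j u) (subst t' j u')"
proof (induct "Suc k" t t' arbitrary: k u u' j rule: split.induct)
  case (split_gt i)
  then have "split k (Var (i - 1)) (Var (Suc (i - 1)))" by (intro split.intros) auto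
  with split_gt show ?case by auto
next
  case (split_lam t t')
  have "split (Suc k) (subst t (Suc j) (lift u 0)) (subst t' (Suc j) (lift u' 0))"
    using split_lam by (intro split_lam(2)) (auto intro!: split_lift)
  then show ?case by (auto intro!: split.intros)
next
  case (split_esub t t' v v')
  have "split (Suc k) (subst t (Suc j) (lift u 0)) (subst t' (Suc j) (lift u' 0))"
    using split_esub by (intro split_esub(2)) (auto intro!: split_lift)
  with split_esub show ?case by (auto intro!: split.intros)
qed (auto intro: split.intros)

lemma split_subst_subst: "split k s s' \<Longrightarrow> subst (subst s' k (lift v k)) k v = subst s k v"
  by (induct arbitrary: v rule: split.induct) (simp_all add: lift_lift[of 0, symmetric])


subsection \<open>Full expansion of explicit substitutions\<close>

text \<open>expand t replaces every explicit substitution of t by the meta-level one,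
  innermost first; it will turn out to compute the j-normal form.\<close>
fun expand :: "trm \<Rightarrow> trm" where
  "expand (Var i) = Var i"
| "expand (Lam t) = Lam (expand t)"
| "expand (App t u) = App (expand t) (expand u)"
| "expand (ESub t u) = subst (expand t) 0 (expand u)"

lemma expand_lift: "expand (lift t k) = lift (expand t) k"
  by (induct t arbitrary: k) auto

lemma expand_subst: "expand (subst t k s) = subst (expand t) k (expand s)"
proof (induct t arbitrary: k s)
  case (ESub t u)
  then show ?case by (simp add: expand_lift subst_subst[of 0 k, symmetric])
qed (auto simp: expand_lift)

lemma split_expand: "split k t t' \<Longrightarrow> split k (expand t) (expand t')"
  by (induct rule: split.induct) (auto intro: split.intros split_subst)

lemma expand_jstep: "jstep t t' \<Longrightarrow> expand t' = expand t"
proof (induct rule: jstep.induct)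
  case (j_c t t' u)
  then show ?case
    using split_subst_subst[OF split_expand[OF j_c(2)], of "expand u"]
    by (simp add: expand_lift)
qed (auto simp: expand_subst)


subsection \<open>Every term reduces to its expansion\<close>

lemma rtranclp_context:
  assumes step: "\<And>x y. R x y \<Longrightarrow> R (f x) (f y)" and "R\<^sup>*\<^sup>* x y"
  shows "R\<^sup>*\<^sup>* (f x) (f y)"
  using assms(2) by induct (auto intro: rtranclp.rtrancl_into_rtrancl step)

lemma jsteps_cong:
  assumes "jstep\<^sup>*\<^sup>* s s'"
  shows "jstep\<^sup>*\<^sup>* (Lam s) (Lam s')" "jstep\<^sup>*\<^sup>* (App s t) (App s' t)"
    "jstep\<^sup>*\<^sup>* (App t s) (App t s')" "jstep\<^sup>*\<^sup>* (ESub s t) (ESub s' t)"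
    "jstep\<^sup>*\<^sup>* (ESub t s) (ESub t s')"
  by (rule rtranclp_context[OF _ assms], erule jstep.intros)+

text \<open>An explicit substitution reduces to the meta-level substitution, by induction on
  the number of occurrences of x: with two or more, rule c splits off a single
  occurrence, and both resulting substitutions have fewer occurrences.\<close>
lemma ESub_jsteps_subst: "jstep\<^sup>*\<^sup>* (ESub s v) (subst s 0 v)"
proof (induct "occ s 0" arbitrary: s v rule: less_induct)
  case less
  show ?case
  proof (cases "occ s 0 \<ge> 2")
    case False
    then have "jstep (ESub s v) (subst s 0 v)" using j_w j_d by force
    then show ?thesis by auto
  next
    case True
    then obtain s' where s': "split 0 s s'" "occ s' 0 = occ s 0 - 1" "occ s' 1 = 1"
      using split_one[of s 0] by auto
    have "jstep (ESub s v) (ESub (ESub s' (lift v 0)) v)"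
      using True s' by (intro j_c) auto
    also have "jstep\<^sup>*\<^sup>* \<dots> (ESub (subst s' 0 (lift v 0)) v)"
      using less[of s' "lift v 0"] s'(2) True by (intro jsteps_cong) simp
    also have "jstep\<^sup>*\<^sup>* \<dots> (subst (subst s' 0 (lift v 0)) 0 v)"
      using less[of "subst s' 0 (lift v 0)" v] s' True by (simp add: occ_subst occ_lift)
    also have "\<dots> = subst s 0 v" using split_subst_subst[OF s'(1)] by simp
    finally show ?thesis .
  qed
qed

lemma jsteps_expand: "jstep\<^sup>*\<^sup>* t (expand t)"
proof (induct t)
  case (ESub t u)
  have "jstep\<^sup>*\<^sup>* (ESub t u) (ESub (expand t) u)" using ESub(1) by (rule jsteps_cong)
  also have "jstep\<^sup>*\<^sup>* \<dots> (ESub (expand t) (expand u))" using ESub(2) by (rule jsteps_cong)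
  also have "jstep\<^sup>*\<^sup>* \<dots> (expand (ESub t u))" by (simp add: ESub_jsteps_subst)
  finally show ?case .
qed (auto intro: jsteps_cong rtranclp_trans)


subsection \<open>Expansions are normal\<close>

fun pure :: "trm \<Rightarrow> bool" where
  "pure (Var i) = True"
| "pure (Lam t) = pure t"
| "pure (App t u) = (pure t \<and> pure u)"
| "pure (ESub t u) = False"

lemma pure_lift: "pure t \<Longrightarrow> pure (lift t k)"
  by (induct t arbitrary: k) auto

lemma pure_subst: "pure t \<Longrightarrow> pure s \<Longrightarrow> pure (subst t k s)"
  by (induct t arbitrary: k s) (auto simp: pure_lift)

lemma pure_expand: "pure (expand t)"
  by (induct t) (auto simp: pure_subst)

lemma jstep_not_pure: "jstep t t' \<Longrightarrow> \<not> pure t"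
  by (induct rule: jstep.induct) auto

lemma j_normal_expand: "j_normal (expand t)"
  unfolding j_normal_def using pure_expand jstep_not_pure by blast


subsection \<open>Confluence from a normalising invariant\<close>

text \<open>If every element reduces to N x and N is invariant under steps, then N
  decides convertibility, which yields confluence and, if the N x are normal,
  unique normal forms.\<close>
lemma normaliser_rtranclp:
  assumes inv: "\<And>x y. R x y \<Longrightarrow> N y = N x" and "R\<^sup>*\<^sup>* x y"
  shows "N y = N x"
  using assms(2)
proof induct
  case (step y z)
  then show ?case using inv[of y z] by simp
qed simp

lemma confluent_by_normaliser:
  assumes reach: "\<And>x. R\<^sup>*\<^sup>* x (N x)" and inv: "\<And>x y. R x y \<Longrightarrow> N y = N x"
  shows "confluent R"
  unfolding confluent_def
proof (intro allI impI)
  fix a b c assume "R\<^sup>*\<^sup>* a b \<and> R\<^sup>*\<^sup>* a c"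
  then have "N b = N a" "N c = N a" by (auto intro: normaliser_rtranclp[OF inv])
  then have "R\<^sup>*\<^sup>* b (N b) \<and> R\<^sup>*\<^sup>* c (N b)" using reach[of b] reach[of c] by simp
  then show "\<exists>d. R\<^sup>*\<^sup>* b d \<and> R\<^sup>*\<^sup>* c d" ..
qed

lemma normal_form_by_normaliser:
  assumes reach: "\<And>x. R\<^sup>*\<^sup>* x (N x)" and inv: "\<And>x y. R x y \<Longrightarrow> N y = N x"
    and normal: "\<And>x. \<nexists>y. R (N x) y"
  shows "R\<^sup>*\<^sup>* x s \<and> (\<nexists>y. R s y) \<longleftrightarrow> s = N x"
proof
  assume s: "R\<^sup>*\<^sup>* x s \<and> (\<nexists>y. R s y)"
  then have "N s = s" using reach[of s] by (auto elim: converse_rtranclpE)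
  moreover have "N s = N x" using s by (auto intro: normaliser_rtranclp[OF inv])
  ultimately show "s = N x" by simp
next
  assume "s = N x"
  then show "R\<^sup>*\<^sup>* x s \<and> (\<nexists>y. R s y)" using reach[of x] normal[of x] by simp
qed

lemma jsteps_normal_form_iff: "jstep\<^sup>*\<^sup>* t s \<and> j_normal s \<longleftrightarrow> s = expand t"
  unfolding j_normal_def
  using jsteps_expand expand_jstep j_normal_expand[unfolded j_normal_def]
  by (rule normal_form_by_normaliser)

lemma jnf_expand: "jnf t = expand t"
  unfolding jnf_def jsteps_normal_form_iff by simp


subsection \<open>Termination\<close>

text \<open>eocc t k counts the occurrences of the variable k in t, where an occurrence
  inside the argument u of t[x/u] is counted once for every occurrence of x in t
  (and at least once): an upper bound for the occurrences after expansion.\<close>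
fun eocc :: "trm \<Rightarrow> nat \<Rightarrow> nat" where
  "eocc (Var i) k = (if i = k then 1 else 0)"
| "eocc (Lam t) k = eocc t (Suc k)"
| "eocc (App t u) k = eocc t k + eocc u k"
| "eocc (ESub t u) k = eocc t (Suc k) + max 1 (eocc t 0) * eocc u k"

text \<open>The interpretation of a term, given a weight rho for each free variable; in
  t[x/u] the variable x is weighted by the size of u times the expanded number of
  occurrences of x, so that duplicating x does not increase the weight.\<close>
fun weight :: "trm \<Rightarrow> (nat \<Rightarrow> nat) \<Rightarrow> nat" where
  "weight (Var i) \<rho> = \<rho> i"
| "weight (Lam t) \<rho> = Suc (weight t (case_nat 1 \<rho>))"
| "weight (App t u) \<rho> = Suc (weight t \<rho> + weight u \<rho>)"
| "weight (ESub t u) \<rho> =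
     weight t (case_nat ((weight u \<rho> + 1) * max 1 (eocc t 0)) \<rho>) + weight u \<rho> + 1"

lemma eocc_lift:
  "eocc (lift s k) j = (if j < k then eocc s j else if j = k then 0 else eocc s (j - 1))"
  by (induct s arbitrary: k j) (auto split: nat.split)

lemma eocc_subst:
  "eocc (subst t k s) j = (if j < k then eocc t j else eocc t (Suc j)) + eocc t k * eocc s j"
  by (induct t arbitrary: k j s) (auto simp: eocc_lift algebra_simps split: nat.split)

text \<open>Expanded occurrences bound actual ones; rule c's side conditions on occ thus
  make the weights of x and y positive.\<close>
lemma occ_le_eocc: "occ t k \<le> eocc t k"
proof (induct t arbitrary: k)
  case (ESub t u)
  have "occ u k \<le> max 1 (eocc t 0) * eocc u k"
    using ESub(2)[of k] by (metis le_trans max.cobounded1 mult_1 mult_le_mono1)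
  with ESub(1)[of "Suc k"] show ?case by simp
qed (auto intro: add_mono)

lemma eocc_split:
  "split k t t' \<Longrightarrow> eocc t' k + eocc t' (Suc k) = eocc t k \<and> (\<forall>j<k. eocc t' j = eocc t j)
     \<and> (\<forall>j>k. eocc t' (Suc j) = eocc t j)"
proof (induct rule: split.induct)
  case (split_lam k t t')
  then show ?case by (auto simp: less_Suc_eq_0_disj)
next
  case (split_esub k t t' u u')
  then have "eocc t' 0 = eocc t 0" by auto
  with split_esub show ?case by (auto simp: algebra_simps add_mult_distrib [symmetric])
qed auto

lemma weight_lift:
  "weight (lift s k) \<rho> = weight s (\<lambda>i. if i < k then \<rho> i else \<rho> (Suc i))"
proof (induct s arbitrary: k \<rho>)
  case (Lam t)
  have "(\<lambda>i. if i < Suc k then case_nat 1 \<rho> i else case_nat 1 \<rho> (Suc i))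
      = case_nat 1 (\<lambda>i. if i < k then \<rho> i else \<rho> (Suc i))"
    by (auto simp: fun_eq_iff split: nat.split)
  then show ?case by (simp only: lift.simps weight.simps Lam)
next
  case (ESub t u)
  have "\<And>a. (\<lambda>i. if i < Suc k then case_nat a \<rho> i else case_nat a \<rho> (Suc i))
      = case_nat a (\<lambda>i. if i < k then \<rho> i else \<rho> (Suc i))"
    by (auto simp: fun_eq_iff split: nat.split)
  with ESub show ?case by (simp add: eocc_lift)
qed auto

lemma weight_subst:
  "weight (subst t k s) \<rho> =
     weight t (\<lambda>i. if i < k then \<rho> i else if i = k then weight s \<rho> else \<rho> (i - 1))"
proof (induct t arbitrary: k s \<rho>)
  case (Lam t)
  have l: "weight (lift s 0) (case_nat 1 \<rho>) = weight s \<rho>" by (simp add: weight_lift)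
  have "(\<lambda>i. if i < Suc k then case_nat 1 \<rho> i
             else if i = Suc k then weight s \<rho> else case_nat 1 \<rho> (i - 1))
      = case_nat 1 (\<lambda>i. if i < k then \<rho> i else if i = k then weight s \<rho> else \<rho> (i - 1))"
    by (auto simp: fun_eq_iff split: nat.split)
  then show ?case by (simp only: subst.simps weight.simps Lam l)
next
  case (ESub t u)
  define \<rho>' where "\<rho>' = (\<lambda>i. if i < k then \<rho> i else if i = k then weight s \<rho> else \<rho> (i - 1))"
  have l: "\<And>a. weight (lift s 0) (case_nat a \<rho>) = weight s \<rho>" by (simp add: weight_lift)
  have e: "\<And>a. (\<lambda>i. if i < Suc k then case_nat a \<rho> i
                   else if i = Suc k then weight s \<rho> else case_nat a \<rho> (i - 1))
      = case_nat a \<rho>'"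
    by (auto simp: fun_eq_iff \<rho>'_def split: nat.split)
  have "eocc (subst t (Suc k) (lift s 0)) 0 = eocc t 0" by (simp add: eocc_subst eocc_lift)
  moreover have "weight (subst u k s) \<rho> = weight u \<rho>'" using ESub(2) \<rho>'_def by simp
  ultimately show ?case by (simp only: subst.simps weight.simps ESub(1) e l \<rho>'_def)
qed auto

lemma weight_mono: "(\<And>i. \<rho> i \<le> \<sigma> i) \<Longrightarrow> weight t \<rho> \<le> weight t \<sigma>"
proof (induct t arbitrary: \<rho> \<sigma>)
  case (Lam t)
  have "weight t (case_nat 1 \<rho>) \<le> weight t (case_nat 1 \<sigma>)"
    by (rule Lam(1)) (use Lam(2) in \<open>auto split: nat.split\<close>)
  then show ?case by simp
next
  case (ESub t u)
  have u: "weight u \<rho> \<le> weight u \<sigma>" using ESub by blast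
  then have "(weight u \<rho> + 1) * max 1 (eocc t 0) \<le> (weight u \<sigma> + 1) * max 1 (eocc t 0)"
    by simp
  then have "weight t (case_nat ((weight u \<rho> + 1) * max 1 (eocc t 0)) \<rho>)
      \<le> weight t (case_nat ((weight u \<sigma> + 1) * max 1 (eocc t 0)) \<sigma>)"
    by (intro ESub(1)) (use ESub(3) in \<open>auto split: nat.split\<close>)
  with u show ?case by simp
qed (auto intro: add_mono)

lemma weight_split:
  "split k t t' \<Longrightarrow> (\<And>i. i < k \<Longrightarrow> \<rho>' i \<le> \<rho> i) \<Longrightarrow> (\<And>i. i > k \<Longrightarrow> \<rho>' (Suc i) \<le> \<rho> i)
   \<Longrightarrow> \<rho>' k + \<rho>' (Suc k) \<le> \<rho> k
   \<Longrightarrow> weight t' \<rho>' + occ t' k * \<rho>' (Suc k) + occ t' (Suc k) * \<rho>' k \<le> weight t \<rho>"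
proof (induct arbitrary: \<rho> \<rho>' rule: split.induct)
  case (split_lam k t t')
  have "weight t' (case_nat 1 \<rho>') + occ t' (Suc k) * case_nat 1 \<rho>' (Suc (Suc k))
      + occ t' (Suc (Suc k)) * case_nat 1 \<rho>' (Suc k) \<le> weight t (case_nat 1 \<rho>)"
    by (rule split_lam(2))
      (use split_lam(3-5) in \<open>auto split: nat.split simp: less_Suc_eq_0_disj\<close>)
  then show ?case by simp
next
  case (split_app k t t' u u')
  then have "weight t' \<rho>' + occ t' k * \<rho>' (Suc k) + occ t' (Suc k) * \<rho>' k \<le> weight t \<rho>"
    and "weight u' \<rho>' + occ u' k * \<rho>' (Suc k) + occ u' (Suc k) * \<rho>' k \<le> weight u \<rho>"
    by blast+
  then show ?case by (simp add: algebra_simps)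
next
  case (split_esub k t t' u u')
  have m0: "eocc t' 0 = eocc t 0" using eocc_split[OF split_esub(1)] by auto
  have hu: "weight u' \<rho>' + occ u' k * \<rho>' (Suc k) + occ u' (Suc k) * \<rho>' k \<le> weight u \<rho>"
    using split_esub by blast
  define e where "e = (weight u \<rho> + 1) * max 1 (eocc t 0)"
  define e' where "e' = (weight u' \<rho>' + 1) * max 1 (eocc t 0)"
  have "e' \<le> e" unfolding e_def e'_def using hu by simp
  then have "weight t' (case_nat e' \<rho>') + occ t' (Suc k) * case_nat e' \<rho>' (Suc (Suc k))
      + occ t' (Suc (Suc k)) * case_nat e' \<rho>' (Suc k) \<le> weight t (case_nat e \<rho>)"
    by (intro split_esub(2))
      (use split_esub(5-7) in \<open>auto split: nat.split simp: less_Suc_eq_0_disj\<close>)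
  with hu show ?case by (simp add: e_def e'_def m0 algebra_simps)
qed auto

lemma eocc_subst_le_ESub: "eocc (subst t 0 u) j \<le> eocc (ESub t u) j"
  by (simp add: eocc_subst)

lemma weight_subst_less_ESub: "weight (subst t 0 u) \<rho> < weight (ESub t u) \<rho>"
proof -
  have le: "weight u \<rho> \<le> (weight u \<rho> + 1) * max 1 (eocc t 0)"
    by (metis le_add1 le_trans max.cobounded1 mult_1_right mult_le_mono2)
  have "weight (subst t 0 u) \<rho>
      \<le> weight t (case_nat ((weight u \<rho> + 1) * max 1 (eocc t 0)) \<rho>)"
    unfolding weight_subst by (rule weight_mono) (use le in \<open>auto split: nat.split\<close>)
  then show ?thesis by simp
qed

lemma eocc_duplicate:
  assumes "split 0 t t'" "occ t' 0 \<ge> 1" "occ t' 1 \<ge> 1"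
  shows "eocc (ESub (ESub t' (lift u 0)) u) j = eocc (ESub t u) j"
proof -
  have "eocc t' 0 \<ge> 1" "eocc t' 1 \<ge> 1" using assms(2,3) occ_le_eocc le_trans by blast+
  moreover have "eocc t 0 = eocc t' 0 + eocc t' 1" "eocc t' (Suc (Suc j)) = eocc t (Suc j)"
    using eocc_split[OF assms(1)] by auto
  ultimately show ?thesis by (simp add: eocc_lift algebra_simps)
qed

text \<open>With w the weight of u, x and y receive weights A and B with A + B = C, the
  old weight of x; by weight_split the body loses at least 2(w + 1), which pays for
  the additional copy of u.\<close>
lemma weight_duplicate_less:
  assumes split: "split 0 t t'" and occ: "occ t' 0 \<ge> 1" "occ t' 1 \<ge> 1"
  shows "weight (ESub (ESub t' (lift u 0)) u) \<rho> < weight (ESub t u) \<rho>"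
proof -
  have ms: "eocc t' 0 + eocc t' 1 = eocc t 0" "\<forall>j>0. eocc t' (Suc j) = eocc t j"
    using eocc_split[OF split] by auto
  have pos: "eocc t' 0 \<ge> 1" "eocc t' 1 \<ge> 1" using occ occ_le_eocc le_trans by blast+
  define w where "w = weight u \<rho>"
  define A where "A = (w + 1) * eocc t' 0"
  define B where "B = (w + 1) * eocc t' 1"
  define C where "C = (w + 1) * eocc t 0"
  have R: "weight (ESub (ESub t' (lift u 0)) u) \<rho>
      = weight t' (case_nat A (case_nat B \<rho>)) + 2 * (w + 1)"
    using pos ms by (simp add: eocc_lift weight_lift A_def B_def w_def)
  have L: "weight (ESub t u) \<rho> = weight t (case_nat C \<rho>) + (w + 1)"
    using pos ms by (simp add: C_def w_def)
  have "weight t' (case_nat A (case_nat B \<rho>)) + occ t' 0 * B + occ t' 1 * A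
      \<le> weight t (case_nat C \<rho>)"
    using weight_split[OF split, of "case_nat A (case_nat B \<rho>)" "case_nat C \<rho>"]
    by (auto simp: A_def B_def C_def ms(1)[symmetric] algebra_simps split: nat.split)
  moreover have "occ t' 0 * B \<ge> w + 1" "occ t' 1 * A \<ge> w + 1"
    using occ pos unfolding A_def B_def
    by (metis mult.commute mult_le_mono mult_1 le_trans order_refl)+
  ultimately show ?thesis unfolding R L by arith
qed

text \<open>Reduction never increases expanded occurrences; this keeps the weight of the
  bound variable from growing when the body of an explicit substitution reduces.\<close>
lemma jstep_eocc_le: "jstep t t' \<Longrightarrow> eocc t' j \<le> eocc t j"
proof (induct arbitrary: j rule: jstep.induct)
  case (j_w t u)
  show ?case by (rule eocc_subst_le_ESub)
next
  case (j_d t u)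
  show ?case by (rule eocc_subst_le_ESub)
next
  case (j_c t t' u)
  then show ?case using eocc_duplicate[of t t' u j] by simp
next
  case (j_esubl t t' u)
  then have "max 1 (eocc t' 0) * eocc u j \<le> max 1 (eocc t 0) * eocc u j"
    by (intro mult_le_mono1) (simp add: max.coboundedI2)
  with j_esubl show ?case by (simp add: add_mono)
next
  case (j_esubr u u' t)
  then have "max 1 (eocc t 0) * eocc u' j \<le> max 1 (eocc t 0) * eocc u j"
    by (intro mult_le_mono2)
  then show ?case by simp
qed (auto intro: add_mono)

lemma jstep_weight_less: "jstep t t' \<Longrightarrow> weight t' \<rho> < weight t \<rho>"
proof (induct arbitrary: \<rho> rule: jstep.induct)
  case (j_w t u)
  show ?case by (rule weight_subst_less_ESub)
next
  case (j_d t u)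
  show ?case by (rule weight_subst_less_ESub)
next
  case (j_c t t' u)
  with weight_duplicate_less show ?case by blast
next
  case (j_esubl t t' u)
  let ?e = "(weight u \<rho> + 1) * max 1 (eocc t' 0)"
  let ?f = "(weight u \<rho> + 1) * max 1 (eocc t 0)"
  have "?e \<le> ?f"
    using jstep_eocc_le[OF j_esubl(1), of 0] by (intro mult_le_mono2 max.mono) simp_all
  then have "weight t (case_nat ?e \<rho>) \<le> weight t (case_nat ?f \<rho>)"
    by (intro weight_mono) (auto split: nat.split)
  with j_esubl(2)[of "case_nat ?e \<rho>"] show ?case
    unfolding weight.simps by linarith
next
  case (j_esubr u u' t)
  let ?e = "(weight u' \<rho> + 1) * max 1 (eocc t 0)"
  let ?f = "(weight u \<rho> + 1) * max 1 (eocc t 0)"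
  have "?e \<le> ?f" using j_esubr(2)[of \<rho>] by simp
  then have "weight t (case_nat ?e \<rho>) \<le> weight t (case_nat ?f \<rho>)"
    by (intro weight_mono) (auto split: nat.split)
  with j_esubr(2)[of \<rho>] show ?case
    unfolding weight.simps by linarith
qed (auto intro: add_less_le_mono add_le_less_mono)

lemma terminating_jstep: "terminating jstep"
  unfolding terminating_def
  by (rule wfp_if_convertible_to_nat[where f = "\<lambda>t. weight t (\<lambda>_. 0)"])
    (rule jstep_weight_less)


theorem lemma9:
  shows "confluent jstep \<and> terminating jstep
    \<and> (\<forall>t. \<exists>!s. jstep\<^sup>*\<^sup>* t s \<and> j_normal s)
    \<and> (\<forall>i. jnf (Var i) = Var i)
    \<and> (\<forall>u. jnf (Lam u) = Lam (jnf u))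
    \<and> (\<forall>u v. jnf (App u v) = App (jnf u) (jnf v))
    \<and> (\<forall>u v. jnf (ESub u v) = subst (jnf u) 0 (jnf v))"
proof (intro conjI allI)
  show "confluent jstep"
    using jsteps_expand expand_jstep by (rule confluent_by_normaliser)
  show "terminating jstep" by (rule terminating_jstep)
  show "\<exists>!s. jstep\<^sup>*\<^sup>* t s \<and> j_normal s" for t
    unfolding jsteps_normal_form_iff by simp
qed (simp_all add: jnf_expand)

end
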